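(* For every integer $n \geq 11$ and every integer $k$ with $5\le k\le n+1$, there exists a separating union-closed family $\mathcal{A}^{(k)}$ with base set $[n]$, height $h=k$ and $|\mathcal{B}(\mathcal{A}^{(k)})|=1$ such that \[\mathrm{Avg}(\mathcal{A}^{(k)}) = \frac{\sum_{A \in \mathcal{A}^{(k)}}|A|}{|\mathcal{A}^{(k)}|} < \frac{n}{2}.\]
   Context: A family of sets $\mathcal{A}$ is union-closed if it is a finite family of distinct finite sets with at least one nonempty member set, and $X,Y\in\mathcal{A}$ implies $X\cup Y\in\mathcal{A}$ (the empty set may be a member). For a family $\mathcal{F}$, $b(\mathcal{F})=\bigcup_{F\in\mathcal{F}}F$; the base set $b(\mathcal{A})$ is denoted $[n]=\{1,\dots,n\}$. $\mathcal{A}$ is separating if for any two distinct $x,y\in[n]$ there is $A\in\mathcal{A}$ containing exactly one of $x,y$. A chain in $\mathcal{A}$ is a subfamily any two distinct members of which are comparable under proper inclusion; the height $h$ of $\mathcal{A}$ is the maximum size of a chain in $\mathcal{A}$. For real $x\ge 0$, $\mathcal{A}_{<x}=\{A\in\mathcal{A} : |A|<x\}$. For $\mathcal{S}\subseteq\mathcal{A}$ and $S\in\mathcal{S}$, $\mathrm{irr}_{\mathcal{S}}(S)=\{s\in S : s\notin b(\mathcal{S}\setminus\{S\})\}$, and $\mathcal{S}$ is irredundant if $\mathrm{irr}_{\mathcal{S}}(S)\neq\emptyset$ for every $S\in\mathcal{S}$. Set $B=b(\mathcal{A}_{<n/2})$, and let $\mathcal{B}(\mathcal{A})$ denote any irredundant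 subfamily of $\mathcal{A}_{<n/2}$ of minimum size such that $b(\mathcal{B}(\mathcal{A}))=B$. *)

theory Defs
  imports Complex_Main
begin

definition union_closed :: "'a set set \<Rightarrow> bool" where
  "union_closed \<A> \<longleftrightarrow> finite \<A> \<and> (\<forall>A\<in>\<A>. finite A) \<and> (\<exists>A\<in>\<A>. A \<noteq> {}) \<and>
     (\<forall>X\<in>\<A>. \<forall>Y\<in>\<A>. X \<union> Y \<in> \<A>)"

definition separating :: "'a set set \<Rightarrow> bool" where
  "separating \<A> \<longleftrightarrow> (\<forall>x\<in>\<Union>\<A>. \<forall>y\<in>\<Union>\<A>. x \<noteq> y \<longrightarrow> (\<exists>A\<in>\<A>. (x \<in> A) \<noteq> (y \<in> A)))"

definition is_chain :: "'a set set \<Rightarrow> bool" where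
  "is_chain \<C> \<longleftrightarrow> (\<forall>X\<in>\<C>. \<forall>Y\<in>\<C>. X \<noteq> Y \<longrightarrow> X \<subset> Y \<or> Y \<subset> X)"

definition height :: "'a set set \<Rightarrow> nat" where
  "height \<A> = Max {card \<C> | \<C>. \<C> \<subseteq> \<A> \<and> is_chain \<C>}"

definition below :: "'a set set \<Rightarrow> real \<Rightarrow> 'a set set" where
  "below \<A> x = {A\<in>\<A>. real (card A) < x}"

definition irr :: "'a set set \<Rightarrow> 'a set \<Rightarrow> 'a set" where
  "irr \<S> S = S - \<Union>(\<S> - {S})"

definition irredundant :: "'a set set \<Rightarrow> bool" where
  "irredundant \<S> \<longleftrightarrow> (\<forall>S\<in>\<S>. irr \<S> S \<noteq> {})"

definition B_size :: "'a set set \<Rightarrow> nat" where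
  "B_size \<A> = (let \<S>0 = below \<A> (real (card (\<Union>\<A>)) / 2) in
     Min {card \<S> | \<S>. \<S> \<subseteq> \<S>0 \<and> irredundant \<S> \<and> \<Union>\<S> = \<Union>\<S>0})"

definition avg :: "'a set set \<Rightarrow> real" where
  "avg \<A> = (\<Sum>A\<in>\<A>. real (card A)) / real (card \<A>)"

end

theory Submission
  imports Defs
begin

(* Take t = (n - 1) div 2 and split the family into lower members, all contained in [t] (the
   segments [i] for i < s and the subsets of [t] of size at least t - 2), and upper members, all
   containing [t + 1] (the segments [i] for t < i <= t + r, [n], and [n] - {y} for y >= t + 2).
   Each part is union-closed and every lower member lies in every upper one, so the family is
   union-closed.  The members of size below n/2 are exactly the lower ones, whose greatest member
   is [t]; hence |B| = 1.  The members of a chain have distinct sizes and the segments realise all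
   s + r + 5 sizes that occur, so the height is s + r + 5, which covers every k from 5 to n + 1.
   The average stays below n/2 because the t choose 2 sets of size t - 2 outweigh the n - t - 1
   sets of size n - 1; the extra segments do not spoil this as long as r = 0 or s = t - 2. *)

lemma inj_on_segments: "inj_on (\<lambda>i::nat. {1..i}) I"
  by (auto simp: inj_on_def)

lemma inj_on_Diff_singleton: "inj_on (\<lambda>y. A - {y}) A"
  by (auto simp: inj_on_def)

lemma is_chain_segments: "is_chain ((\<lambda>i::nat. {1..i}) ` I)"
  unfolding is_chain_def by (auto simp: linorder_neq_iff)

lemma inj_on_card_chain:
  assumes "is_chain C" and "\<forall>X\<in>C. finite X"
  shows "inj_on card C"
proof (rule inj_onI, rule ccontr)
  fix X Y assume "X \<in> C" "Y \<in> C" "card X = card Y" "X \<noteq> Y"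
  with assms show False
    unfolding is_chain_def by (metis psubset_card_mono less_irrefl)
qed

lemma height_eq_card_chain:
  assumes "finite F" and "\<forall>A\<in>F. finite A" and "C \<subseteq> F" and "is_chain C"
    and "card ` F \<subseteq> card ` C"
  shows "height F = card C"
  unfolding height_def
proof (rule Max_eqI)
  have "{card D | D. D \<subseteq> F \<and> is_chain D} \<subseteq> card ` Pow F" by blast
  then show "finite {card D | D. D \<subseteq> F \<and> is_chain D}"
    using assms(1) by (meson finite_Pow_iff finite_imageI finite_subset)
  show "card C \<in> {card D | D. D \<subseteq> F \<and> is_chain D}" using assms(3,4) by blast
  fix m assume "m \<in> {card D | D. D \<subseteq> F \<and> is_chain D}"
  then obtain D where D: "m = card D" "D \<subseteq> F" "is_chain D" by blast
  have finite_members: "\<forall>X\<in>D. finite X" "\<forall>X\<in>C. finite X" using assms(2,3) D(2) by blast+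
  have "card D = card (card ` D)"
    using card_image[OF inj_on_card_chain[OF D(3) finite_members(1)]] by simp
  also have "\<dots> \<le> card (card ` C)"
  proof (rule card_mono)
    show "finite (card ` C)" using assms(1,3) finite_subset by blast
    show "card ` D \<subseteq> card ` C" using D(2) assms(5) by blast
  qed
  also have "\<dots> = card C"
    using card_image[OF inj_on_card_chain[OF assms(4) finite_members(2)]] .
  finally show "m \<le> card C" using D(1) by simp
qed

lemma B_size_eq_1_if_greatest:
  fixes F :: "'a set set"
  defines "S0 \<equiv> below F (real (card (\<Union>F)) / 2)"
  assumes "finite F" and "M \<in> S0" and "M \<noteq> {}" and "\<forall>A\<in>S0. A \<subseteq> M"
  shows "B_size F = 1"
proof -
  let ?sizes = "{card \<S> | \<S>. \<S> \<subseteq> S0 \<and> irredundant \<S> \<and> \<Union>\<S> = \<Union>S0}"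
  have finite_S0: "finite S0" using assms(2) unfolding S0_def below_def by simp
  have "?sizes \<subseteq> card ` Pow S0" by blast
  then have "finite ?sizes" using finite_S0 by (meson finite_Pow_iff finite_imageI finite_subset)
  moreover have "1 \<in> ?sizes"
  proof -
    have "irredundant {M}" using assms(4) unfolding irredundant_def irr_def by simp
    moreover have "\<Union>{M} = \<Union>S0" using assms(3,5) by blast
    ultimately show ?thesis using assms(3) by (intro CollectI exI[of _ "{M}"]) auto
  qed
  moreover have "1 \<le> m" if m: "m \<in> ?sizes" for m
  proof -
    obtain \<S> where \<S>: "m = card \<S>" "\<S> \<subseteq> S0" "\<Union>\<S> = \<Union>S0" using m by blast
    then have "\<S> \<noteq> {}" using assms(3,4) by auto
    then show ?thesis using \<S>(1,2) finite_S0 by (simp add: Suc_le_eq card_gt_0_iff finite_subset)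
  qed
  ultimately have "Min ?sizes = 1" by (intro Min_eqI) auto
  then show ?thesis unfolding B_size_def Let_def S0_def .
qed

lemma avg_less_half_iff:
  fixes F :: "'a set set"
  assumes "finite F" and "F \<noteq> {}"
  shows "avg F < real n / 2 \<longleftrightarrow> (\<Sum>A\<in>F. 2 * int (card A) - int n) < 0"
proof -
  have "real (card F) > 0" using assms by (simp add: card_gt_0_iff)
  then have "avg F < real n / 2 \<longleftrightarrow> 2 * (\<Sum>A\<in>F. real (card A)) < real n * real (card F)"
    unfolding avg_def by (simp only: pos_divide_less_eq) linarith
  also have "\<dots> \<longleftrightarrow> 2 * (\<Sum>A\<in>F. int (card A)) < int n * int (card F)"
  proof -
    have "real_of_int (2 * (\<Sum>A\<in>F. int (card A))) = 2 * (\<Sum>A\<in>F. real (card A))"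
      and "real_of_int (int n * int (card F)) = real n * real (card F)" by simp_all
    then show ?thesis by (simp only: of_int_less_iff[where 'a=real, symmetric])
  qed
  also have "\<dots> \<longleftrightarrow> (\<Sum>A\<in>F. 2 * int (card A) - int n) < 0"
    by (simp add: sum_subtractf sum_distrib_left mult.commute)
  finally show ?thesis .
qed

lemma sum_atLeastLessThan_double_minus:
  "a \<le> b \<Longrightarrow> (\<Sum>i\<in>{a..<b}. 2 * int i - c) = int (b - a) * (int a + int b - 1 - c)"
  by (induction b rule: dec_induct) (simp_all add: algebra_simps of_nat_diff)

lemma two_times_choose_two: "2 * (m choose 2) = m * (m - 1)"
  by (induction m) (auto simp: numeral_2_eq_2 algebra_simps)

lemma sum_subsets_by_card:
  assumes "finite T" and "finite J"
  shows "(\<Sum>A | A \<subseteq> T \<and> card A \<in> J. f (card A)) = (\<Sum>j\<in>J. of_nat (card T choose j) * f j)"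
proof -
  let ?S = "{A. A \<subseteq> T \<and> card A \<in> J}"
  have "finite ?S" using assms(1) by (simp add: finite_subset[of _ "Pow T"] subset_eq)
  then have "(\<Sum>A\<in>?S. f (card A)) = (\<Sum>j\<in>J. \<Sum>A\<in>{A \<in> ?S. card A = j}. f (card A))"
    using assms(2) by (intro sum.group[symmetric]) auto
  also have "\<dots> = (\<Sum>j\<in>J. of_nat (card T choose j) * f j)"
  proof (rule sum.cong)
    fix j assume "j \<in> J"
    then have "{A \<in> ?S. card A = j} = {A. A \<subseteq> T \<and> card A = j}" by auto
    then show "(\<Sum>A\<in>{A \<in> ?S. card A = j}. f (card A)) = of_nat (card T choose j) * f j"
      using n_subsets[OF assms(1)] by simp
  qed simp
  finally show ?thesis .
qed

(* The excess over n/2 of the layers of [t], of [n] and of the sets [n] - {y}, with c = t choose 2. *)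
lemma excess_core_neg:
  fixes n t c :: int
  assumes c: "2 * c = t * (t - 1)" and t: "5 \<le> t" and n: "n = 2*t+1 \<or> n = 2*t+2"
  shows "c * (2*t - 4 - n) + t * (2*t - 2 - n) + (2*t - n) + n + (n - t - 1) * (n - 2) < 0"
    (is "?core < 0")
proof -
  define core where "core = ?core"
  from n have "2 * core = t - t * t \<or> 2 * core = 6 * t - 2 * (t * t)"
    unfolding core_def using c by (elim disjE) (simp_all add: algebra_simps)
  moreover have "5 * t \<le> t * t" using t by (intro mult_right_mono) auto
  ultimately have "core < 0" using t by (elim disjE) linarith+
  then show ?thesis unfolding core_def .
qed

lemma excess_segments_nonpos:
  fixes n t s r :: int
  assumes t: "5 \<le> t" and n: "2*t+1 \<le> n" "n \<le> 2*t+2"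
    and s: "0 \<le> s" "s \<le> t - 2" and r: "0 \<le> r" "t + r + 2 \<le> n"
    and rs: "r = 0 \<or> s = t - 2"
  shows "s * (s - 1 - n) + r * (2*t + r + 1 - n) \<le> 0"
  using rs
proof
  assume "r = 0"
  then show ?thesis using s n by (simp add: mult_nonneg_nonpos)
next
  assume s_eq: "s = t - 2"
  have "s * (s - 1 - n) \<le> (t - 2) * (- t - 4)"
    unfolding s_eq using t n by (intro mult_left_mono) auto
  moreover have "r * (2*t + r + 1 - n) \<le> t * (t - 1)"
  proof (cases "0 \<le> 2*t + r + 1 - n")
    case True
    then show ?thesis using r n by (intro mult_mono) auto
  next
    case False
    then have "r * (2*t + r + 1 - n) \<le> 0" using r by (simp add: mult_nonneg_nonpos)
    moreover have "0 \<le> t * (t - 1)" using t by simp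
    ultimately show ?thesis by linarith
  qed
  moreover have "(t - 2) * (- t - 4) + t * (t - 1) = 8 - 3 * t" by (simp add: algebra_simps)
  ultimately show ?thesis using t by linarith
qed

definition lower_family :: "nat \<Rightarrow> nat \<Rightarrow> nat set set" where
  "lower_family t s = (\<lambda>i. {1..i}) ` {..<s} \<union> {A. A \<subseteq> {1..t} \<and> t - 2 \<le> card A}"

definition upper_family :: "nat \<Rightarrow> nat \<Rightarrow> nat \<Rightarrow> nat set set" where
  "upper_family n t r = (\<lambda>i. {1..i}) ` ({t<..t+r} \<union> {n}) \<union> (\<lambda>y. {1..n} - {y}) ` {t+2..n}"

definition witness_family :: "nat \<Rightarrow> nat \<Rightarrow> nat \<Rightarrow> nat \<Rightarrow> nat set set" where
  "witness_family n t s r = lower_family t s \<union> upper_family n t r"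

context
  fixes n t s r :: nat
  assumes t_ge: "5 \<le> t" and n_gt: "2 * t < n" and n_le: "n \<le> 2 * t + 2"
    and s_le: "s + 2 \<le> t" and r_le: "t + r + 2 \<le> n"
begin

lemma lower_family_subset: "X \<in> lower_family t s \<Longrightarrow> X \<subseteq> {1..t}"
  using s_le unfolding lower_family_def by auto

lemma upper_family_bounds: "X \<in> upper_family n t r \<Longrightarrow> {1..t+1} \<subseteq> X \<and> X \<subseteq> {1..n}"
  using r_le unfolding upper_family_def by auto

lemma lower_family_Un:
  assumes X: "X \<in> lower_family t s" and Y: "Y \<in> lower_family t s"
  shows "X \<union> Y \<in> lower_family t s"
proof (cases "\<exists>i j. i < s \<and> j < s \<and> X = {1..i} \<and> Y = {1..j}")
  case True
  then obtain i j where "i < s" "j < s" "X = {1..i}" "Y = {1..j}" by blast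
  then have "X \<union> Y = {1..max i j}" "max i j < s" by (auto simp: max_def)
  then show ?thesis unfolding lower_family_def by blast
next
  case False
  then obtain A where A: "A \<in> {X, Y}" "A \<subseteq> {1..t}" "t - 2 \<le> card A"
    using X Y unfolding lower_family_def by blast
  have XY: "X \<union> Y \<subseteq> {1..t}" using X Y lower_family_subset by blast
  then have "card A \<le> card (X \<union> Y)" using A(1) by (intro card_mono) (auto intro: finite_subset)
  then show ?thesis using A XY unfolding lower_family_def by auto
qed

lemma upper_family_Un:
  assumes X: "X \<in> upper_family n t r" and Y: "Y \<in> upper_family n t r"
  shows "X \<union> Y \<in> upper_family n t r"
proof (cases "\<exists>y \<in> {t+2..n}. {1..n} - {y} \<in> {X, Y}")
  case True
  then obtain y where y: "y \<in> {t+2..n}" "{1..n} - {y} \<subseteq> X \<union> Y" by blast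
  moreover have "X \<union> Y \<subseteq> {1..n}" using X Y upper_family_bounds by blast
  ultimately have "X \<union> Y = {1..n} - {y} \<or> X \<union> Y = {1..n}" by blast
  then show ?thesis using y unfolding upper_family_def by auto
next
  case False
  then obtain i j where "i \<in> {t<..t+r} \<union> {n}" "j \<in> {t<..t+r} \<union> {n}" "X = {1..i}" "Y = {1..j}"
    using X Y unfolding upper_family_def by blast
  then have "X \<union> Y = {1..max i j}" "max i j \<in> {t<..t+r} \<union> {n}" by (auto simp: max_def)
  then show ?thesis unfolding upper_family_def by blast
qed

lemma witness_family_subset: "X \<in> witness_family n t s r \<Longrightarrow> X \<subseteq> {1..n}"
  using lower_family_subset upper_family_bounds n_gt unfolding witness_family_def by fastforce

lemma top_in_witness_family: "{1..n} \<in> witness_family n t s r"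
  unfolding witness_family_def upper_family_def by blast

lemma layer_in_witness_family:
  "A \<subseteq> {1..t} \<Longrightarrow> t - 2 \<le> card A \<Longrightarrow> A \<in> witness_family n t s r"
  unfolding witness_family_def lower_family_def by blast

lemma cosingleton_in_witness_family:
  "t + 2 \<le> y \<Longrightarrow> y \<le> n \<Longrightarrow> {1..n} - {y} \<in> witness_family n t s r"
  unfolding witness_family_def upper_family_def by auto

lemma finite_witness_family: "finite (witness_family n t s r)"
  using witness_family_subset
  by (meson Pow_iff finite_Pow_iff finite_atLeastAtMost finite_subset subsetI)

lemma finite_member_witness_family: "X \<in> witness_family n t s r \<Longrightarrow> finite X"
  using witness_family_subset finite_subset by blast

lemma Union_witness_family: "\<Union>(witness_family n t s r) = {1..n}"
  using witness_family_subset top_in_witness_family by blast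

lemma lower_subset_upper:
  assumes "X \<in> lower_family t s" and "Y \<in> upper_family n t r"
  shows "X \<subseteq> Y"
proof -
  have "{1..t} \<subseteq> {1..t+1}" by auto
  then show ?thesis using lower_family_subset[OF assms(1)] upper_family_bounds[OF assms(2)] by blast
qed

lemma witness_family_Un:
  assumes X: "X \<in> witness_family n t s r" and Y: "Y \<in> witness_family n t s r"
  shows "X \<union> Y \<in> witness_family n t s r"
proof -
  consider "X \<in> lower_family t s" "Y \<in> lower_family t s"
    | "X \<in> upper_family n t r" "Y \<in> upper_family n t r"
    | "X \<in> lower_family t s" "Y \<in> upper_family n t r"
    | "X \<in> upper_family n t r" "Y \<in> lower_family t s"
    using X Y unfolding witness_family_def by blast
  then show ?thesis
  proof cases
    case 1
    then show ?thesis using lower_family_Un unfolding witness_family_def by blast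
  next
    case 2
    then show ?thesis using upper_family_Un unfolding witness_family_def by blast
  next
    case 3
    then have "X \<union> Y = Y" using lower_subset_upper by blast
    then show ?thesis using Y by simp
  next
    case 4
    then have "X \<union> Y = X" using lower_subset_upper by blast
    then show ?thesis using X by simp
  qed
qed

lemma witness_family_union_closed: "union_closed (witness_family n t s r)"
  unfolding union_closed_def
proof (intro conjI)
  show "\<exists>A\<in>witness_family n t s r. A \<noteq> {}"
    using top_in_witness_family n_gt by (intro bexI[of _ "{1..n}"]) auto
qed (use finite_witness_family finite_member_witness_family witness_family_Un in blast)+

lemma witness_family_separating: "separating (witness_family n t s r)"
  unfolding separating_def Union_witness_family
proof (intro ballI impI)
  fix x y assume x: "x \<in> {1..n}" and y: "y \<in> {1..n}" and "x \<noteq> y"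
  have segment_t: "{1..t} \<in> witness_family n t s r" by (rule layer_in_witness_family) auto
  consider "x \<le> t" "y \<le> t" | "(x \<le> t) \<noteq> (y \<le> t)" | "t + 2 \<le> x" "x \<le> n" | "t + 2 \<le> y" "y \<le> n"
    using x y \<open>x \<noteq> y\<close> by fastforce
  then show "\<exists>A\<in>witness_family n t s r. (x \<in> A) \<noteq> (y \<in> A)"
  proof cases
    case 1
    then have "{1..t} - {x} \<in> witness_family n t s r" using x by (intro layer_in_witness_family) auto
    then show ?thesis using 1 x y \<open>x \<noteq> y\<close> by (intro bexI[of _ "{1..t} - {x}"]) auto
  next
    case 2
    then show ?thesis using segment_t x y by (intro bexI[of _ "{1..t}"]) auto
  next
    case 3
    then show ?thesis using cosingleton_in_witness_family y \<open>x \<noteq> y\<close>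
      by (intro bexI[of _ "{1..n} - {x}"]) auto
  next
    case 4
    then show ?thesis using cosingleton_in_witness_family x \<open>x \<noteq> y\<close>
      by (intro bexI[of _ "{1..n} - {y}"]) auto
  qed
qed

abbreviation sizes :: "nat set" where
  "sizes \<equiv> {..<s} \<union> {t-2..t+r} \<union> {n-1, n}"

lemma card_sizes: "card sizes = s + r + 5"
proof -
  have disj: "{..<s} \<inter> {t-2..t+r} = {}" "({..<s} \<union> {t-2..t+r}) \<inter> {n-1, n} = {}"
    using s_le r_le by auto
  have "card ({..<s} \<union> {t-2..t+r}) = s + (r + 3)"
    using card_Un_disjoint[OF _ _ disj(1)] t_ge by simp
  moreover have "card {n-1, n} = 2" using n_gt by simp
  ultimately show ?thesis using card_Un_disjoint[OF _ _ disj(2)] by simp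
qed

lemma card_witness_family_subset: "card ` witness_family n t s r \<subseteq> sizes"
proof
  fix c assume "c \<in> card ` witness_family n t s r"
  then obtain X where X: "X \<in> witness_family n t s r" "c = card X" by blast
  have "card X \<le> t" if "X \<subseteq> {1..t}" using card_mono[OF _ that] by simp
  with X show "c \<in> sizes"
    unfolding witness_family_def lower_family_def upper_family_def by (auto simp: card_Diff_singleton)
qed

lemma segments_subset_witness_family: "(\<lambda>i. {1..i}) ` sizes \<subseteq> witness_family n t s r"
proof
  fix X assume "X \<in> (\<lambda>i. {1..i}) ` sizes"
  then obtain i where i: "i \<in> sizes" "X = {1..i}" by blast
  have "{1..n-1} = {1..n} - {n}" by auto
  with i t_ge n_gt show "X \<in> witness_family n t s r"
    unfolding witness_family_def lower_family_def upper_family_def by auto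
qed

lemma height_witness_family: "height (witness_family n t s r) = s + r + 5"
proof -
  let ?C = "(\<lambda>i. {1..i}) ` sizes"
  have "height (witness_family n t s r) = card ?C"
  proof (rule height_eq_card_chain)
    show "finite (witness_family n t s r)" by (rule finite_witness_family)
    show "\<forall>X\<in>witness_family n t s r. finite X" using finite_member_witness_family by blast
    show "?C \<subseteq> witness_family n t s r" by (rule segments_subset_witness_family)
    show "is_chain ?C" by (rule is_chain_segments)
    show "card ` witness_family n t s r \<subseteq> card ` ?C"
      using card_witness_family_subset by (simp add: image_image)
  qed
  also have "\<dots> = card sizes" by (rule card_image[OF inj_on_segments])
  finally show ?thesis using card_sizes by simp
qed

lemma below_witness_family:
  "below (witness_family n t s r) (real (card (\<Union>(witness_family n t s r))) / 2) = lower_family t s"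
proof -
  have lower: "real (card X) < real n / 2" if "X \<in> lower_family t s" for X
  proof -
    have "card X \<le> t" using card_mono[OF _ lower_family_subset[OF that]] by simp
    then show ?thesis using n_gt by linarith
  qed
  have upper: "\<not> real (card X) < real n / 2" if "X \<in> upper_family n t r" for X
  proof -
    have "{1..t+1} \<subseteq> X" "finite X" using upper_family_bounds[OF that] finite_subset by auto
    then have "card {1..t+1} \<le> card X" by (intro card_mono)
    then show ?thesis using n_le by simp
  qed
  have half: "real (card (\<Union>(witness_family n t s r))) / 2 = real n / 2"
    by (simp add: Union_witness_family)
  show ?thesis unfolding below_def half using lower upper unfolding witness_family_def by blast
qed

lemma B_size_witness_family: "B_size (witness_family n t s r) = 1"
proof (rule B_size_eq_1_if_greatest)
  show "{1..t} \<in> below (witness_family n t s r) (real (card (\<Union>(witness_family n t s r))) / 2)"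
    unfolding below_witness_family lower_family_def by simp
qed (use finite_witness_family t_ge lower_family_subset in \<open>auto simp: below_witness_family\<close>)

lemma layers_eq:
  "{A. A \<subseteq> {1..t} \<and> t - 2 \<le> card A} = {A. A \<subseteq> {1..t} \<and> card A \<in> {t-2..t}}"
  using card_mono[of "{1..t}"] by auto

lemma excess_lower_family:
  "(\<Sum>A\<in>lower_family t s. 2 * int (card A) - int n) =
     int s * (int s - 1 - int n) + (\<Sum>j\<in>{t-2..t}. int (t choose j) * (2 * int j - int n))"
proof -
  let ?f = "\<lambda>A. 2 * int (card A) - int n"
  let ?L = "{A. A \<subseteq> {1..t} \<and> t - 2 \<le> card A}"
  have "finite ?L" by (rule finite_subset[of _ "Pow {1..t}"]) auto
  moreover have "(\<lambda>i. {1..i}) ` {..<s} \<inter> ?L = {}" using s_le by auto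
  ultimately have "sum ?f (lower_family t s) = sum ?f ((\<lambda>i. {1..i}) ` {..<s}) + sum ?f ?L"
    unfolding lower_family_def by (simp add: sum.union_disjoint)
  also have "sum ?f ((\<lambda>i. {1..i}) ` {..<s}) = (\<Sum>i\<in>{0..<s}. 2 * int i - int n)"
    by (subst sum.reindex[OF inj_on_segments]) (simp add: atLeast0LessThan)
  also have "\<dots> = int s * (int s - 1 - int n)"
    by (simp add: sum_atLeastLessThan_double_minus)
  also have "sum ?f ?L = (\<Sum>j\<in>{t-2..t}. int (t choose j) * (2 * int j - int n))"
    using sum_subsets_by_card[of "{1..t}" "{t-2..t}" "\<lambda>c. 2 * int c - int n"]
    unfolding layers_eq by simp
  finally show ?thesis .
qed

lemma excess_upper_family:
  "(\<Sum>A\<in>upper_family n t r. 2 * int (card A) - int n) =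
     int r * (2 * int t + int r + 1 - int n) + int n + (int n - int t - 1) * (int n - 2)"
proof -
  let ?f = "\<lambda>A. 2 * int (card A) - int n"
  let ?S = "(\<lambda>i. {1..i}) ` ({t<..t+r} \<union> {n})"
  let ?C = "(\<lambda>y. {1..n} - {y}) ` {t+2..n}"
  have "card X \<noteq> n - 1" if "X \<in> ?S" for X using that r_le by auto
  moreover have "card X = n - 1" if "X \<in> ?C" for X using that by (auto simp: card_Diff_singleton)
  ultimately have disjoint: "?S \<inter> ?C = {}" by blast
  have "sum ?f (upper_family n t r) = sum ?f ?S + sum ?f ?C"
    unfolding upper_family_def by (rule sum.union_disjoint[OF _ _ disjoint]) simp_all
  also have "sum ?f ?S = (\<Sum>i\<in>{t+1..<t+r+1}. 2 * int i - int n) + int n"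
  proof -
    have "{t<..t+r} \<union> {n} = insert n {t+1..<t+r+1}" by auto
    moreover have "n \<notin> {t+1..<t+r+1}" using r_le by simp
    ultimately show ?thesis by (subst sum.reindex[OF inj_on_segments]) simp
  qed
  also have "(\<Sum>i\<in>{t+1..<t+r+1}. 2 * int i - int n) = int r * (2 * int t + int r + 1 - int n)"
    by (subst sum_atLeastLessThan_double_minus) (simp_all add: algebra_simps)
  also have "sum ?f ?C = (\<Sum>y\<in>{t+2..n}. 2 * int (n - 1) - int n)"
  proof (subst sum.reindex)
    show "inj_on (\<lambda>y. {1..n} - {y}) {t+2..n}" by (rule inj_on_subset[OF inj_on_Diff_singleton]) auto
  qed (simp add: card_Diff_singleton)
  also have "\<dots> = (int n - int t - 1) * (int n - 2)" using r_le by (simp add: of_nat_diff)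
  finally show ?thesis by simp
qed

lemma excess_layers:
  "(\<Sum>j\<in>{t-2..t}. int (t choose j) * (2 * int j - int n)) =
     int (t choose 2) * (2 * int t - 4 - int n) + int t * (2 * int t - 2 - int n) + (2 * int t - int n)"
proof -
  define u where "u = t - 2"
  have t: "t = u + 2" using t_ge unfolding u_def by simp
  have "{t-2..t} = {u, u+1, u+2}" unfolding t by auto
  then have "(\<Sum>j\<in>{t-2..t}. int (t choose j) * (2 * int j - int n)) =
      int (t choose u) * (2 * int u - int n) + int (t choose (u+1)) * (2 * int (u+1) - int n)
      + int (t choose (u+2)) * (2 * int (u+2) - int n)"
    by simp
  moreover have "t choose u = t choose 2" "t choose (u+1) = t" "t choose (u+2) = 1"
    unfolding t using binomial_symmetric[of 2 "u+2"] binomial_symmetric[of 1 "u+2"] by simp_all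
  ultimately show ?thesis unfolding t by (simp add: algebra_simps)
qed

lemma avg_witness_family:
  assumes "r = 0 \<or> s + 2 = t"
  shows "avg (witness_family n t s r) < real n / 2"
proof -
  let ?f = "\<lambda>A. 2 * int (card A) - int n"
  have "lower_family t s \<inter> upper_family n t r = {}"
    using lower_family_subset upper_family_bounds by fastforce
  then have "sum ?f (witness_family n t s r) = sum ?f (lower_family t s) + sum ?f (upper_family n t r)"
    using finite_witness_family unfolding witness_family_def by (simp add: sum.union_disjoint)
  also have "\<dots> = (int s * (int s - 1 - int n) + int r * (2 * int t + int r + 1 - int n))
      + (int (t choose 2) * (2 * int t - 4 - int n) + int t * (2 * int t - 2 - int n) + (2 * int t - int n)
         + int n + (int n - int t - 1) * (int n - 2))"
    unfolding excess_lower_family excess_upper_family excess_layers by simp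
  also have "\<dots> < 0"
  proof (rule add_nonpos_neg)
    show "int s * (int s - 1 - int n) + int r * (2 * int t + int r + 1 - int n) \<le> 0"
      using t_ge n_gt n_le s_le r_le assms by (intro excess_segments_nonpos) auto
    have "2 * int (t choose 2) = int t * (int t - 1)"
      using arg_cong[OF two_times_choose_two[of t], of int] t_ge by (simp add: of_nat_diff)
    then show "int (t choose 2) * (2 * int t - 4 - int n) + int t * (2 * int t - 2 - int n)
        + (2 * int t - int n) + int n + (int n - int t - 1) * (int n - 2) < 0"
      using t_ge n_gt n_le by (intro excess_core_neg) auto
  qed
  finally show ?thesis
    using avg_less_half_iff finite_witness_family top_in_witness_family by blast
qed

end

theorem theorem3p2:
  fixes n k :: nat
  assumes "n \<ge> 11" and "5 \<le> k" and "k \<le> n + 1"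
  shows "\<exists>\<A> :: nat set set. union_closed \<A> \<and> \<Union>\<A> = {1..n} \<and> separating \<A> \<and>
           height \<A> = k \<and> B_size \<A> = 1 \<and> avg \<A> < real n / 2"
proof -
  define t where "t = (n - 1) div 2"
  have t_bounds: "5 \<le> t" "2 * t < n" "n \<le> 2 * t + 2"
    using assms(1) unfolding t_def by presburger+
  obtain s r where sr: "s + 2 \<le> t" "t + r + 2 \<le> n" and "r = 0 \<or> s + 2 = t" and "k = s + r + 5"
  proof (cases "k \<le> t + 3")
    case True
    then show ?thesis using that[of "k - 5" 0] assms t_bounds by auto
  next
    case False
    then show ?thesis using that[of "t - 2" "k - t - 3"] assms t_bounds by auto
  qed
  note context_assms = t_bounds sr
  show ?thesis
    using witness_family_union_closed[OF context_assms] Union_witness_family[OF context_assms]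
      witness_family_separating[OF context_assms] height_witness_family[OF context_assms]
      B_size_witness_family[OF context_assms] avg_witness_family[OF context_assms]
      \<open>r = 0 \<or> s + 2 = t\<close> \<open>k = s + r + 5\<close>
    by blast
qed

end
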